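(* Let $p_{ij}\ge0$ ($i,j\in\{1,2\}$) with $p_{11}+p_{12}\le1$, $p_{21}+p_{22}\le1$, let $\epsilon_1,\epsilon_2\ge0$, $c=(c_1,c_2)\in\mathbb{R}^2$, and $$P_1=\begin{pmatrix}p_{11}-\epsilon_1&p_{12}\\ p_{21}-\epsilon_2&p_{22}\end{pmatrix},\qquad P_2=\begin{pmatrix}p_{11}&p_{12}-\epsilon_1\\ p_{21}&p_{22}-\epsilon_2\end{pmatrix}.$$ Assume $\det(I-P_1)>0$ and $\det(I-P_2)>0$, and let $x=(I-P_1)^{-1}c$ and $y=(I-P_2)^{-1}c$. If $x_1\ge x_2$ and $y_2\ge y_1$, then $x=y$ and $x_1=x_2$ (so the common fixed point is a multiple of $(1,1)$). In particular, unless $x=y$ is a multiple of $(1,1)$, at most one of the conditions $x_1\ge x_2$ (the fixed point of $P_1$ lies in the region where $P_1$ is active) and $y_2\ge y_1$ (the fixed point of $P_2$ lies in the region where $P_2$ is active) holds.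
   Context: For a two-state fixed policy, the operator $x\mapsto c+\max\{\hat Px-\epsilon\max_{s}x_s,0\}$ acts as $x\mapsto c+P_1x$ on the region $x_1\ge x_2$ (when the maxima with $0$ are attained by the first argument), and as $x\mapsto c+P_2x$ on the region $x_2\ge x_1$; here $\hat P=(p_{ij})$. *)

theory Defs
  imports "HOL-Analysis.Analysis"
begin

text \<open>2x2 matrices as real^2^2; row i is A $ i, entry (i,j) is A $ i $ j.\<close>

definition mat2 :: "real \<Rightarrow> real \<Rightarrow> real \<Rightarrow> real \<Rightarrow> real^2^2" where
  "mat2 a b c d = (\<chi> i j. if i = 1 then (if j = 1 then a else b) else (if j = 1 then c else d))"

definition vec2 :: "real \<Rightarrow> real \<Rightarrow> real^2" where
  "vec2 a b = (\<chi> i. if i = 1 then a else b)"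

definition Pone :: "real \<Rightarrow> real \<Rightarrow> real \<Rightarrow> real \<Rightarrow> real \<Rightarrow> real \<Rightarrow> real^2^2" where
  "Pone p11 p12 p21 p22 e1 e2 = mat2 (p11 - e1) p12 (p21 - e2) p22"

definition Ptwo :: "real \<Rightarrow> real \<Rightarrow> real \<Rightarrow> real \<Rightarrow> real \<Rightarrow> real \<Rightarrow> real^2^2" where
  "Ptwo p11 p12 p21 p22 e1 e2 = mat2 p11 (p12 - e1) p21 (p22 - e2)"

end

theory Submission
  imports Defs
begin

text \<open>Both \<open>I - P\<^sub>1\<close> and \<open>I - P\<^sub>2\<close> send \<open>(1,1)\<close> to the same vector \<open>a\<close> of row slacks
  \<open>1 - p\<^sub>i\<^sub>1 - p\<^sub>i\<^sub>2 + \<epsilon>\<^sub>i\<close>. For any \<open>2\<times>2\<close> matrix \<open>M\<close>, multiplicativity of the determinant gives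
  \<open>det M \<cdot> (z\<^sub>1 - z\<^sub>2) = det [M z | M (1,1)]\<close>, so \<open>det (I - P\<^sub>1) (x\<^sub>1 - x\<^sub>2)\<close> and
  \<open>det (I - P\<^sub>2) (y\<^sub>1 - y\<^sub>2)\<close> both equal \<open>a\<^sub>2 c\<^sub>1 - a\<^sub>1 c\<^sub>2\<close>. The two sign conditions force this
  number to vanish, so \<open>x\<close> and \<open>y\<close> are multiples of \<open>(1,1)\<close>, on which the two matrices agree;
  injectivity of \<open>I - P\<^sub>1\<close> then gives \<open>x = y\<close>.\<close>

lemma matrix_vector_mul_matrix_inv_right:
  fixes A :: "'a::field^'n^'n"
  assumes "invertible A"
  shows "A *v (matrix_inv A *v v) = v"
proof -
  have "A ** matrix_inv A = mat 1"
    using assms unfolding invertible_def matrix_inv_def by (rule someI_ex[THEN conjunct1])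
  then show ?thesis by (simp add: matrix_vector_mul_assoc)
qed

lemma vec_eq_iff_2: "(z::'a^2) = w \<longleftrightarrow> z $ 1 = w $ 1 \<and> z $ 2 = w $ 2"
  by (metis (mono_tags) exhaust_2 vec_eq_iff)

lemma det_2_mult_component_diff:
  fixes M :: "real^2^2" and z :: "real^2"
  shows "det M * (z $ 1 - z $ 2)
           = (M *v z) $ 1 * (M *v vec 1) $ 2 - (M *v z) $ 2 * (M *v vec 1) $ 1"
  by (simp add: det_2 matrix_vector_mult_def sum_2 algebra_simps)

lemma fixed_points_on_diagonal_if_agree_on_ones:
  fixes M N :: "real^2^2" and x y c :: "real^2"
  assumes detM: "det M > 0" and detN: "det N > 0"
    and ones: "M *v vec 1 = N *v vec 1"
    and x: "M *v x = c" and y: "N *v y = c"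
    and "x $ 1 \<ge> x $ 2" and "y $ 2 \<ge> y $ 1"
  shows "x = y \<and> x $ 1 = x $ 2"
proof -
  define K where "K = c $ 1 * (M *v vec 1) $ 2 - c $ 2 * (M *v vec 1) $ 1"
  have Kx: "det M * (x $ 1 - x $ 2) = K"
    using det_2_mult_component_diff[of M x] x by (simp add: K_def)
  have Ky: "det N * (y $ 1 - y $ 2) = K"
    using det_2_mult_component_diff[of N y] y ones by (simp add: K_def)
  have "K \<ge> 0" using Kx detM \<open>x $ 1 \<ge> x $ 2\<close> by (metis diff_ge_0_iff_ge less_imp_le mult_nonneg_nonneg)
  moreover have "K \<le> 0" using Ky detN \<open>y $ 2 \<ge> y $ 1\<close> by (metis diff_le_0_iff_le less_imp_le mult_nonneg_nonpos)
  ultimately have "K = 0" by simp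
  then have x_diag: "x $ 1 = x $ 2" and y_diag: "y $ 1 = y $ 2"
    using Kx Ky detM detN by auto
  have "y = y $ 1 *s vec 1"
    using y_diag by (simp add: vec_eq_iff_2)
  then have "M *v y = N *v y"
    by (metis ones vector_scalar_commute)
  then have "M *v y = M *v x"
    using x y by simp
  moreover have "inj ((*v) M)"
    using detM by (simp add: inj_matrix_vector_mult invertible_det_nz)
  ultimately have "x = y"
    by (simp add: inj_eq)
  with x_diag show ?thesis by simp
qed

lemma Pone_Ptwo_same_row_sums:
  "(mat 1 - Pone p11 p12 p21 p22 e1 e2) *v vec 1 = (mat 1 - Ptwo p11 p12 p21 p22 e1 e2) *v vec 1"
  by (simp add: vec_eq_iff_2 matrix_vector_mult_def sum_2 Pone_def Ptwo_def mat2_def mat_def)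

theorem mainTheorem8:
  fixes p11 p12 p21 p22 e1 e2 c1 c2 :: real
  assumes "p11 \<ge> 0" "p12 \<ge> 0" "p21 \<ge> 0" "p22 \<ge> 0"
    and "p11 + p12 \<le> 1" "p21 + p22 \<le> 1"
    and "e1 \<ge> 0" "e2 \<ge> 0"
    and "det (mat 1 - Pone p11 p12 p21 p22 e1 e2) > 0"
    and "det (mat 1 - Ptwo p11 p12 p21 p22 e1 e2) > 0"
    and "x = matrix_inv (mat 1 - Pone p11 p12 p21 p22 e1 e2) *v vec2 c1 c2"
    and "y = matrix_inv (mat 1 - Ptwo p11 p12 p21 p22 e1 e2) *v vec2 c1 c2"
    and "x $ 1 \<ge> x $ 2" and "y $ 2 \<ge> y $ 1"
  shows "x = y \<and> x $ 1 = x $ 2"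
proof (rule fixed_points_on_diagonal_if_agree_on_ones)
  show "(mat 1 - Pone p11 p12 p21 p22 e1 e2) *v x = vec2 c1 c2"
    using assms(9,11) by (simp add: matrix_vector_mul_matrix_inv_right invertible_det_nz)
  show "(mat 1 - Ptwo p11 p12 p21 p22 e1 e2) *v y = vec2 c1 c2"
    using assms(10,12) by (simp add: matrix_vector_mul_matrix_inv_right invertible_det_nz)
qed (use assms Pone_Ptwo_same_row_sums in auto)

end
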